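(* For any finite connected interval graph $G$, $\mathrm{imp}(G)\ge \mathrm{wt}(G)$.
   Context: A finite simple graph $G=(V,E)$ is an interval graph iff there is a representation $\alpha: v\mapsto I_v$ of the vertices by (closed, bounded) intervals of the real line such that $vw\in E$ iff $I_v\cap I_w\neq\emptyset$. For a representation $\alpha$ and a vertex $z$, the impropriety $\mathrm{imp}_\alpha(z)$ is the number of representing intervals $I_w$, $w\neq z$, with $I_w\subseteq I_z$. The impropriety $\mathrm{imp}(\alpha)$ is $\max_z \mathrm{imp}_\alpha(z)$, and $\mathrm{imp}(G)$ is the minimum of $\mathrm{imp}(\alpha)$ over all interval representations $\alpha$ of $G$. A local component at $z$ is a connected component of $G\setminus\{z\}$; it is exterior iff it contains a vertex not adjacent to $z$. If $z$ has $n$ local components, the weight $\mathrm{wt}(z)$ is the sum of the $n-2$ smallest orders among the non-exterior local components at $z$ ($0$ if $n\le2$). The weight $\mathrm{wt}(G)$ is the maximum of $\mathrm{wt}(z)$ over all vertices $z$. *)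

theory Defs
  imports Complex_Main "HOL-Library.Multiset"
begin

definition simple_graph :: "'a set \<Rightarrow> ('a \<Rightarrow> 'a \<Rightarrow> bool) \<Rightarrow> bool" where
  "simple_graph V E \<longleftrightarrow> finite V \<and> (\<forall>u v. E u v \<longrightarrow> u \<in> V \<and> v \<in> V)
     \<and> (\<forall>u v. E u v \<longrightarrow> E v u) \<and> (\<forall>u. \<not> E u u)"

definition reach :: "'a set \<Rightarrow> ('a \<Rightarrow> 'a \<Rightarrow> bool) \<Rightarrow> 'a \<Rightarrow> 'a \<Rightarrow> bool" where
  "reach S E u v \<longleftrightarrow> u \<in> S \<and> v \<in> S \<and> (\<lambda>x y. E x y \<and> x \<in> S \<and> y \<in> S)\<^sup>*\<^sup>* u v"

definition connected_graph :: "'a set \<Rightarrow> ('a \<Rightarrow> 'a \<Rightarrow> bool) \<Rightarrow> bool" where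
  "connected_graph V E \<longleftrightarrow> V \<noteq> {} \<and> (\<forall>u\<in>V. \<forall>v\<in>V. reach V E u v)"

definition interval_rep :: "'a set \<Rightarrow> ('a \<Rightarrow> 'a \<Rightarrow> bool) \<Rightarrow> ('a \<Rightarrow> real set) \<Rightarrow> bool" where
  "interval_rep V E I \<longleftrightarrow> (\<forall>v\<in>V. \<exists>a b. a \<le> b \<and> I v = {a..b})
     \<and> (\<forall>v\<in>V. \<forall>w\<in>V. v \<noteq> w \<longrightarrow> (E v w \<longleftrightarrow> I v \<inter> I w \<noteq> {}))"

definition interval_graph :: "'a set \<Rightarrow> ('a \<Rightarrow> 'a \<Rightarrow> bool) \<Rightarrow> bool" where
  "interval_graph V E \<longleftrightarrow> simple_graph V E \<and> (\<exists>I. interval_rep V E I)"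

definition imp_vertex :: "'a set \<Rightarrow> ('a \<Rightarrow> real set) \<Rightarrow> 'a \<Rightarrow> nat" where
  "imp_vertex V I z = card {w \<in> V. w \<noteq> z \<and> I w \<subseteq> I z}"

definition imp_rep :: "'a set \<Rightarrow> ('a \<Rightarrow> real set) \<Rightarrow> nat" where
  "imp_rep V I = Max (imp_vertex V I ` V)"

definition imp_graph :: "'a set \<Rightarrow> ('a \<Rightarrow> 'a \<Rightarrow> bool) \<Rightarrow> nat" where
  "imp_graph V E = (LEAST k. \<exists>I. interval_rep V E I \<and> imp_rep V I = k)"

definition local_comps :: "'a set \<Rightarrow> ('a \<Rightarrow> 'a \<Rightarrow> bool) \<Rightarrow> 'a \<Rightarrow> 'a set set" where
  "local_comps V E z = {{v. reach (V - {z}) E u v} | u. u \<in> V - {z}}"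

definition exterior :: "('a \<Rightarrow> 'a \<Rightarrow> bool) \<Rightarrow> 'a \<Rightarrow> 'a set \<Rightarrow> bool" where
  "exterior E z C \<longleftrightarrow> (\<exists>v\<in>C. \<not> E z v)"

definition wt_vertex :: "'a set \<Rightarrow> ('a \<Rightarrow> 'a \<Rightarrow> bool) \<Rightarrow> 'a \<Rightarrow> nat" where
  "wt_vertex V E z =
     (let n = card (local_comps V E z);
          orders = image_mset card (mset_set {C \<in> local_comps V E z. \<not> exterior E z C})
      in sum_list (take (n - 2) (sorted_list_of_multiset orders)))"

definition wt_graph :: "'a set \<Rightarrow> ('a \<Rightarrow> 'a \<Rightarrow> bool) \<Rightarrow> nat" where
  "wt_graph V E = Max (wt_vertex V E ` V)"

end

theory Submission
  imports Defs
begin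

(*
  Fix an interval representation I of G attaining imp(G) and a vertex z with
  I z = [a, b].  Call a local component at z inner if all its intervals lie
  inside [a, b].  A component that is not inner contains a vertex whose
  interval leaves [a, b] and, since G is connected, also a neighbour of z,
  whose interval meets [a, b]; walking between them inside the component, some
  interval must cover a or b.  Two different local components cannot both have
  an interval covering the same point (those vertices would be adjacent), so at
  most two components are not inner.  Inner components are not exterior, and
  their vertices are counted in imp(z).  Hence the n - 2 smallest orders of the
  non-exterior components sum to at most the total order of the inner ones,
  which is at most imp(z) <= imp(G).
*)

section \<open>Sums of the smallest elements\<close>

lemma sum_take_sorted_le:
  fixes xs ys :: "nat list"
  assumes "sorted xs" "mset ys \<subseteq># mset xs" "k \<le> length ys"
  shows "sum_list (take k xs) \<le> sum_list ys"
  using assms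
proof (induction xs arbitrary: ys k)
  case Nil
  then show ?case by simp
next
  case (Cons x xs)
  show ?case
  proof (cases k)
    case 0
    then show ?thesis by simp
  next
    case (Suc k')
    show ?thesis
    proof (cases "x \<in> set ys")
      case True
      define ys' where "ys' = remove1 x ys"
      have ys_eq: "mset ys = add_mset x (mset ys')"
        using True by (simp add: ys'_def)
      have "mset ys' \<subseteq># mset xs" using Cons.prems(2) ys_eq by simp
      moreover have "k' \<le> length ys'"
        using Cons.prems(3) Suc True by (simp add: ys'_def length_remove1)
      ultimately have "sum_list (take k' xs) \<le> sum_list ys'" using Cons by simp
      moreover have "sum_list ys = x + sum_list ys'"
        by (metis ys_eq sum_mset.add_mset sum_mset_sum_list)
      ultimately show ?thesis using Suc by simp
    next
      case False
      text \<open>Otherwise every entry of ys is a later entry of xs, hence at least x.\<close>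
      then obtain y ys' where ys: "ys = y # ys'"
        using Cons.prems(3) Suc by (cases ys) auto
      have sub: "mset ys \<subseteq># mset xs"
        using Cons.prems(2) False
        by (metis Diff_eq_empty_iff_mset minus_add_mset_if_not_in_lhs mset.simps(2) set_mset_mset)
      then have "y \<in> set xs"
        using ys by (metis list.set_intros(1) mset_subset_eqD set_mset_mset)
      then have "x \<le> y" using Cons.prems(1) by simp
      moreover have "mset ys' \<subseteq># mset xs"
        using sub ys by (metis mset.simps(2) mset_subset_eq_insertD subset_mset.less_imp_le)
      then have "sum_list (take k' xs) \<le> sum_list ys'"
        using Cons.IH[of ys' k'] Cons.prems Suc ys by simp
      ultimately show ?thesis using Suc ys by simp
    qed
  qed
qed

lemma sum_smallest_le_sum_submultiset:
  fixes M N :: "nat multiset"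
  assumes "N \<subseteq># M" and "k \<le> size N"
  shows "sum_list (take k (sorted_list_of_multiset M)) \<le> sum_mset N"
proof -
  have "sum_list (take k (sorted_list_of_multiset M)) \<le> sum_list (sorted_list_of_multiset N)"
  proof (rule sum_take_sorted_le)
    show "k \<le> length (sorted_list_of_multiset N)"
      using assms(2) by (metis mset_sorted_list_of_multiset size_mset)
  qed (use assms(1) in auto)
  also have "\<dots> = sum_mset N"
    by (metis mset_sorted_list_of_multiset sum_mset_sum_list)
  finally show ?thesis .
qed

section \<open>Reachability and local components\<close>

lemma reach_sym:
  assumes "\<forall>u v. E u v \<longrightarrow> E v u" and "reach S E u v"
  shows "reach S E v u"
proof -
  have "symp (\<lambda>x y. E x y \<and> x \<in> S \<and> y \<in> S)" using assms(1) by (auto intro: sympI)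
  then have "symp (\<lambda>x y. E x y \<and> x \<in> S \<and> y \<in> S)\<^sup>*\<^sup>*" by (rule symp_rtranclp)
  then show ?thesis using assms(2) unfolding reach_def by (auto dest: sympD)
qed

lemma reach_trans: "reach S E u v \<Longrightarrow> reach S E v w \<Longrightarrow> reach S E u w"
  unfolding reach_def by auto

lemma walk_imp_reach:
  "(\<lambda>x y. E x y \<and> x \<in> S \<and> y \<in> S)\<^sup>*\<^sup>* v w \<Longrightarrow> v \<in> S \<Longrightarrow> reach S E v w"
  unfolding reach_def by (induction rule: rtranclp_induct) (auto intro: rtranclp.rtrancl_into_rtrancl)

lemma local_comp_subset: "C \<in> local_comps V E z \<Longrightarrow> C \<subseteq> V - {z}"
  unfolding local_comps_def reach_def by auto

lemma local_comp_eq: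
  assumes "\<forall>u v. E u v \<longrightarrow> E v u" and "C \<in> local_comps V E z" and "x \<in> C"
  shows "C = {v. reach (V - {z}) E x v}"
proof -
  obtain u where C: "C = {v. reach (V - {z}) E u v}"
    using assms(2) unfolding local_comps_def by auto
  have ux: "reach (V - {z}) E u x" using assms(3) C by auto
  then have "reach (V - {z}) E x u" using reach_sym assms(1) by metis
  then show ?thesis using C ux reach_trans[of "V - {z}" E] by blast
qed

lemma local_comps_disjoint:
  assumes "\<forall>u v. E u v \<longrightarrow> E v u" and "C1 \<in> local_comps V E z" and "C2 \<in> local_comps V E z"
    and "x \<in> C1" and "x \<in> C2"
  shows "C1 = C2"
  using local_comp_eq[OF assms(1) assms(2,4)] local_comp_eq[OF assms(1) assms(3,5)] by simp

text \<open>Every vertex v \<noteq> z from which z is reachable reaches, while avoiding z,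
  a neighbour of z: follow a walk to z up to its first visit of z.\<close>
lemma reach_neighbour_avoiding:
  assumes "reach V E v z" and "v \<noteq> z"
  shows "\<exists>u. reach (V - {z}) E v u \<and> E u z"
proof -
  have "(\<lambda>x y. E x y \<and> x \<in> V \<and> y \<in> V)\<^sup>*\<^sup>* v z" using assms unfolding reach_def by auto
  then show ?thesis using assms(2)
  proof (induction rule: converse_rtranclp_induct)
    case base
    then show ?case by simp
  next
    case (step y y')
    show ?case
    proof (cases "y' = z")
      case True
      then show ?thesis using step.hyps(1) step.prems by (auto simp: reach_def)
    next
      case False
      then obtain u where u: "reach (V - {z}) E y' u" "E u z" using step.IH by blast
      have "reach (V - {z}) E y y'"
        using step.hyps(1) step.prems False unfolding reach_def by auto
      then show ?thesis using u reach_trans[of "V - {z}" E y y' u] by blast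
    qed
  qed
qed

section \<open>Walks of intervals\<close>

text \<open>Discrete intermediate value theorem: along a walk in which each interval
  [lo, hi] reaches back to the previous one, if the first interval starts left
  of p and the last one reaches p, then some interval on the walk contains p.\<close>
lemma walk_covers_point:
  fixes lo hi :: "'a \<Rightarrow> real"
  assumes step: "\<And>x y. Q x y \<Longrightarrow> lo y \<le> hi x"
  shows "Q\<^sup>*\<^sup>* x y \<Longrightarrow> lo x < p \<Longrightarrow> p \<le> hi y \<Longrightarrow> \<exists>w. Q\<^sup>*\<^sup>* x w \<and> lo w \<le> p \<and> p \<le> hi w"
proof (induction rule: converse_rtranclp_induct)
  case base
  then show ?case by auto
next
  case (step x x')
  show ?case
  proof (cases "p \<le> hi x")
    case True
    then show ?thesis using step by auto
  next
    case False
    then have "lo x' < p" using assms step by force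
    then obtain w where "Q\<^sup>*\<^sup>* x' w \<and> lo w \<le> p \<and> p \<le> hi w" using step by auto
    then show ?thesis using step(1) by (auto intro: converse_rtranclp_into_rtranclp)
  qed
qed

text \<open>The mirror image, obtained by reflecting the real line.\<close>
lemma walk_covers_point_mirror:
  fixes lo hi :: "'a \<Rightarrow> real"
  assumes "\<And>x y. Q x y \<Longrightarrow> lo x \<le> hi y" and "Q\<^sup>*\<^sup>* x y" and "p < hi x" and "lo y \<le> p"
  shows "\<exists>w. Q\<^sup>*\<^sup>* x w \<and> lo w \<le> p \<and> p \<le> hi w"
  using walk_covers_point[of Q "\<lambda>v. - hi v" "\<lambda>v. - lo v" x y "- p"] assms by force

section \<open>Local components in an interval model\<close>

locale interval_model =
  fixes V :: "'a set" and E :: "'a \<Rightarrow> 'a \<Rightarrow> bool" and I :: "'a \<Rightarrow> real set"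
    and lo hi :: "'a \<Rightarrow> real"
  assumes simple: "simple_graph V E"
    and connected: "connected_graph V E"
    and interval: "\<And>v. v \<in> V \<Longrightarrow> lo v \<le> hi v \<and> I v = {lo v..hi v}"
    and adjacent_iff: "\<And>v w. v \<in> V \<Longrightarrow> w \<in> V \<Longrightarrow> v \<noteq> w \<Longrightarrow> E v w \<longleftrightarrow> lo v \<le> hi w \<and> lo w \<le> hi v"

lemma interval_rep_endpoints:
  assumes "interval_rep V E I"
  obtains lo hi where "\<And>v. v \<in> V \<Longrightarrow> lo v \<le> hi v \<and> I v = {lo v..hi v}"
    and "\<And>v w. v \<in> V \<Longrightarrow> w \<in> V \<Longrightarrow> v \<noteq> w \<Longrightarrow> E v w \<longleftrightarrow> lo v \<le> hi w \<and> lo w \<le> hi v"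
proof -
  obtain lo hi where lh: "\<forall>v\<in>V. lo v \<le> hi v \<and> I v = {lo v..hi v}"
    using assms unfolding interval_rep_def by metis
  moreover have "E v w \<longleftrightarrow> lo v \<le> hi w \<and> lo w \<le> hi v" if "v \<in> V" "w \<in> V" "v \<noteq> w" for v w
  proof -
    have "E v w \<longleftrightarrow> I v \<inter> I w \<noteq> {}" using assms that unfolding interval_rep_def by auto
    also have "\<dots> \<longleftrightarrow> lo v \<le> hi w \<and> lo w \<le> hi v" using lh that by auto
    finally show ?thesis .
  qed
  ultimately show ?thesis using that by blast
qed

context interval_model
begin

lemma finite_V: "finite V"
  using simple unfolding simple_graph_def by auto

lemma edge_sym: "\<forall>u v. E u v \<longrightarrow> E v u"
  using simple unfolding simple_graph_def by auto

lemma edge_in_V: "E u v \<Longrightarrow> u \<in> V \<and> v \<in> V"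
  using simple unfolding simple_graph_def by auto

lemma edge_irrefl: "\<not> E u u"
  using simple unfolding simple_graph_def by auto

definition inner_comps :: "'a \<Rightarrow> 'a set set" where
  "inner_comps z = {C \<in> local_comps V E z. \<forall>v\<in>C. I v \<subseteq> I z}"

definition covers :: "real \<Rightarrow> 'a set \<Rightarrow> bool" where
  "covers p C \<longleftrightarrow> (\<exists>w\<in>C. lo w \<le> p \<and> p \<le> hi w)"

lemma finite_local_comps: "finite (local_comps V E z)"
proof -
  have "local_comps V E z \<subseteq> Pow (V - {z})" using local_comp_subset[of _ V E z] by auto
  moreover have "finite (Pow (V - {z}))" using finite_V by simp
  ultimately show ?thesis by (rule finite_subset)
qed

lemma outer_comp_covers_endpoint:
  assumes z: "z \<in> V" and C: "C \<in> local_comps V E z - inner_comps z"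
  shows "covers (lo z) C \<or> covers (hi z) C"
proof -
  define S where "S = V - {z}"
  define R where "R = (\<lambda>x y. E x y \<and> x \<in> S \<and> y \<in> S)"
  have R_overlap: "lo y \<le> hi x \<and> lo x \<le> hi y" if "R x y" for x y
  proof -
    have "x \<noteq> y" using that edge_irrefl unfolding R_def by auto
    then show ?thesis using that adjacent_iff[of x y] unfolding R_def S_def by auto
  qed
  obtain v where v: "v \<in> C" "\<not> I v \<subseteq> I z" using C unfolding inner_comps_def by auto
  have vS: "v \<in> S" using v C local_comp_subset[of C V E z] unfolding S_def by auto
  have C_eq: "C = {x. reach S E v x}"
    using local_comp_eq[OF edge_sym, of C V z v] C v unfolding S_def by simp
  have sticks_out: "lo v < lo z \<or> hi z < hi v"
    using v(2) vS interval[of v] interval[OF z] unfolding S_def by auto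
  have "reach V E v z" using connected vS z unfolding connected_graph_def S_def by auto
  then obtain u where u: "reach S E v u" "E u z"
    using reach_neighbour_avoiding[of V E v z] vS unfolding S_def by auto
  have walk: "R\<^sup>*\<^sup>* v u" using u(1) unfolding reach_def R_def by auto
  have "u \<in> V" "u \<noteq> z" using u(2) edge_in_V edge_irrefl by auto
  then have u_meets: "lo z \<le> hi u \<and> lo u \<le> hi z" using adjacent_iff[of u z] u(2) z by auto
  have in_C: "w \<in> C" if "R\<^sup>*\<^sup>* v w" for w
    using walk_imp_reach[of E S v w] that vS C_eq unfolding R_def by auto
  show ?thesis
  proof (cases "lo v < lo z")
    case True
    then obtain w where "R\<^sup>*\<^sup>* v w" "lo w \<le> lo z" "lo z \<le> hi w"
      using walk_covers_point[of R lo hi, OF conjunct1[OF R_overlap] walk] u_meets by auto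
    then show ?thesis using in_C unfolding covers_def by auto
  next
    case False
    then have "hi z < hi v" using sticks_out by simp
    then obtain w where "R\<^sup>*\<^sup>* v w" "lo w \<le> hi z" "hi z \<le> hi w"
      using walk_covers_point_mirror[of R lo hi, OF conjunct2[OF R_overlap] walk] u_meets by auto
    then show ?thesis using in_C unfolding covers_def by auto
  qed
qed

text \<open>Intervals covering a common point belong to adjacent (or equal) vertices,
  so at most one local component covers a given point.\<close>
lemma covering_comps_eq:
  assumes C1: "C1 \<in> local_comps V E z" and C2: "C2 \<in> local_comps V E z"
    and "covers p C1" and "covers p C2"
  shows "C1 = C2"
proof -
  obtain w1 w2 where w: "w1 \<in> C1" "lo w1 \<le> p" "p \<le> hi w1" "w2 \<in> C2" "lo w2 \<le> p" "p \<le> hi w2"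
    using assms(3,4) unfolding covers_def by auto
  have w1S: "w1 \<in> V - {z}" using w(1) local_comp_subset[OF C1] by auto
  have w2S: "w2 \<in> V - {z}" using w(4) local_comp_subset[OF C2] by auto
  have "reach (V - {z}) E w1 w2"
  proof (cases "w1 = w2")
    case True
    then show ?thesis using w1S unfolding reach_def by simp
  next
    case False
    then have "E w1 w2" using adjacent_iff[of w1 w2] w1S w2S w by auto
    then show ?thesis using w1S w2S unfolding reach_def by (simp add: r_into_rtranclp)
  qed
  then have "w2 \<in> C1" using local_comp_eq[OF edge_sym C1 w(1)] by simp
  then show ?thesis using local_comps_disjoint[OF edge_sym C1 C2 _ w(4)] by simp
qed

text \<open>At most two local components are not inner: each covers lo z or hi z.\<close>
lemma card_outer_comps:
  assumes "z \<in> V"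
  shows "card (local_comps V E z - inner_comps z) \<le> 2"
proof -
  define f where "f = (\<lambda>C. if covers (lo z) C then lo z else hi z)"
  have covers_f: "covers (f C) C" if "C \<in> local_comps V E z - inner_comps z" for C
    using outer_comp_covers_endpoint[OF assms that] unfolding f_def by auto
  have "inj_on f (local_comps V E z - inner_comps z)"
  proof (rule inj_onI)
    fix C1 C2
    assume C: "C1 \<in> local_comps V E z - inner_comps z" "C2 \<in> local_comps V E z - inner_comps z"
      and same: "f C1 = f C2"
    have "covers (f C1) C1" "covers (f C1) C2" using covers_f[OF C(1)] covers_f[OF C(2)] same by auto
    then show "C1 = C2" using covering_comps_eq C by blast
  qed
  then have "card (local_comps V E z - inner_comps z) = card (f ` (local_comps V E z - inner_comps z))"
    by (simp add: card_image)
  also have "\<dots> \<le> card {lo z, hi z}" by (rule card_mono) (auto simp: f_def)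
  also have "\<dots> \<le> 2" by (simp add: card_insert_le_m1)
  finally show ?thesis .
qed

lemma inner_not_exterior:
  assumes "z \<in> V" and "C \<in> inner_comps z"
  shows "\<not> exterior E z C"
proof -
  have "E z v" if "v \<in> C" for v
  proof -
    have vV: "v \<in> V - {z}"
      using assms(2) that local_comp_subset[of C V E z] unfolding inner_comps_def by auto
    have "I v \<subseteq> I z" using assms(2) that unfolding inner_comps_def by auto
    then have "lo z \<le> hi v \<and> lo v \<le> hi z" using interval[of v] interval[OF assms(1)] vV by auto
    then show ?thesis using adjacent_iff[of z v] assms(1) vV by auto
  qed
  then show ?thesis unfolding exterior_def by auto
qed

text \<open>The inner components are disjoint sets of vertices whose intervals lie in
  I z, so their total order is at most the impropriety of z.\<close>
lemma sum_inner_orders_le: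
  assumes "z \<in> V"
  shows "(\<Sum>C\<in>inner_comps z. card C) \<le> imp_vertex V I z"
proof -
  have inner_sub: "inner_comps z \<subseteq> local_comps V E z" unfolding inner_comps_def by auto
  have "(\<Sum>C\<in>inner_comps z. card C) = card (\<Union>(inner_comps z))"
  proof (rule card_Union_disjoint[symmetric])
    show "pairwise disjnt (inner_comps z)"
    proof (rule pairwiseI)
      fix C1 C2 assume "C1 \<in> inner_comps z" "C2 \<in> inner_comps z" "C1 \<noteq> C2"
      then show "disjnt C1 C2"
        using local_comps_disjoint[OF edge_sym, of C1 V z C2] inner_sub
        unfolding disjnt_def by auto
    qed
    show "finite C" if "C \<in> inner_comps z" for C
      using that inner_sub local_comp_subset[of C V E z] finite_V by (auto intro: finite_subset)
  qed
  also have "\<dots> \<le> card {w \<in> V. w \<noteq> z \<and> I w \<subseteq> I z}"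
  proof (rule card_mono)
    show "finite {w \<in> V. w \<noteq> z \<and> I w \<subseteq> I z}" using finite_V by auto
    show "\<Union>(inner_comps z) \<subseteq> {w \<in> V. w \<noteq> z \<and> I w \<subseteq> I z}"
      using local_comp_subset[of _ V E z] unfolding inner_comps_def by fastforce
  qed
  finally show ?thesis unfolding imp_vertex_def .
qed

lemma wt_vertex_le_imp_vertex:
  assumes z: "z \<in> V"
  shows "wt_vertex V E z \<le> imp_vertex V I z"
proof -
  define NE where "NE = {C \<in> local_comps V E z. \<not> exterior E z C}"
  have inner_NE: "inner_comps z \<subseteq> NE"
    using inner_not_exterior[OF z] unfolding NE_def inner_comps_def by auto
  have finite_NE: "finite NE" using finite_local_comps unfolding NE_def by simp
  have inner_sub: "inner_comps z \<subseteq> local_comps V E z" unfolding inner_comps_def by auto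
  have "card (local_comps V E z - inner_comps z) = card (local_comps V E z) - card (inner_comps z)"
    by (rule card_Diff_subset[OF finite_subset[OF inner_sub finite_local_comps] inner_sub])
  then have many_inner: "card (local_comps V E z) - 2 \<le> card (inner_comps z)"
    using card_outer_comps[OF z] by linarith
  have "image_mset card (mset_set (inner_comps z)) \<subseteq># image_mset card (mset_set NE)"
    by (rule image_mset_subseteq_mono[OF subset_imp_msubset_mset_set[OF inner_NE finite_NE]])
  then have "wt_vertex V E z \<le> sum_mset (image_mset card (mset_set (inner_comps z)))"
    unfolding wt_vertex_def Let_def NE_def[symmetric]
    by (rule sum_smallest_le_sum_submultiset) (simp add: many_inner)
  also have "\<dots> = (\<Sum>C\<in>inner_comps z. card C)" by (simp add: sum_unfold_sum_mset)
  also have "\<dots> \<le> imp_vertex V I z" by (rule sum_inner_orders_le[OF z])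
  finally show ?thesis .
qed

end

theorem corollary2p3:
  fixes V :: "'a set" and E :: "'a \<Rightarrow> 'a \<Rightarrow> bool"
  assumes "simple_graph V E" and "connected_graph V E" and "interval_graph V E"
  shows "imp_graph V E \<ge> wt_graph V E"
proof -
  have finite_V: "finite V" using assms(1) unfolding simple_graph_def by auto
  have "V \<noteq> {}" using assms(2) unfolding connected_graph_def by auto
  then have "wt_graph V E \<in> wt_vertex V E ` V"
    unfolding wt_graph_def using finite_V by (intro Max_in) auto
  then obtain z where z: "z \<in> V" "wt_graph V E = wt_vertex V E z" by auto
  have "\<exists>k I. interval_rep V E I \<and> imp_rep V I = k"
    using assms(3) unfolding interval_graph_def by auto
  then obtain I where I: "interval_rep V E I" "imp_rep V I = imp_graph V E"
    using LeastI_ex[of "\<lambda>k. \<exists>I. interval_rep V E I \<and> imp_rep V I = k"]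
    unfolding imp_graph_def by blast
  obtain lo hi where "\<And>v. v \<in> V \<Longrightarrow> lo v \<le> hi v \<and> I v = {lo v..hi v}"
    and "\<And>v w. v \<in> V \<Longrightarrow> w \<in> V \<Longrightarrow> v \<noteq> w \<Longrightarrow> E v w \<longleftrightarrow> lo v \<le> hi w \<and> lo w \<le> hi v"
    using interval_rep_endpoints[OF I(1)] by blast
  then interpret interval_model V E I lo hi
    using assms(1,2) by unfold_locales
  have "wt_vertex V E z \<le> imp_vertex V I z" by (rule wt_vertex_le_imp_vertex[OF z(1)])
  also have "\<dots> \<le> imp_rep V I" unfolding imp_rep_def using finite_V z(1) by simp
  finally show ?thesis using z I by simp
qed

end
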